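(* Consider a finite MDP with states $\mathcal{X}=\{1,\dots,n\}$, finite action set $\mathcal{A}$, costs $c(i,a)$, discount factor $\vartheta\in(0,1)$, a policy $\pi:\mathcal{X}\to\mathcal{A}$, uncertainty sets $\mathcal{P}^a_i$, proxy uncertainty sets $\widehat{\mathcal{P}^a_i}$, exploration matrix $P^{\widehat{\pi}}$ with stationary distribution $\xi$ and feature matrix $\Phi\in\mathbb{R}^{n\times d}$ as in the context. Suppose there is $\alpha\in(0,1)$ with $\vartheta p_j\le\alpha P^{\widehat{\pi}}_{ij}$ for all $i,j\in\mathcal{X}$, $a\in\mathcal{A}$, $p\in\mathcal{P}^a_i$; let $\beta^a_i:=\max_{y\in\widehat{U^a_i}}\min_{x\in U^a_i}\|y-x\|_\xi/\xi_{\min}$, $\beta:=\max_{i}\beta^{\pi(i)}_i$, and assume $\alpha^2+\vartheta^2\beta^2<\tfrac12$. Let $\widetilde{v}_\pi\in\mathbb{R}^n$ satisfy $\Pi\widehat{T}_\pi\widetilde{v}_\pi=\widetilde{v}_\pi$ and let $v_\pi\in\mathbb{R}^n$ satisfy $T_\pi v_\pi=v_\pi$. Then \[ \|\widetilde{v}_\pi-v_\pi\|_\xi\le\frac{\vartheta\beta\|v_\pi\|_\xi+\|\Pi v_\pi-v_\pi\|_\xi}{1-\sqrt{2(\alpha^2+\vartheta^2\beta^2)}} . \] In particular, if $\beta^{\pi(i)}_i=0$ for all $i$ (the proxy confidence regions equal the true ones), then $\|\widetilde{v}_\pi-v_\pi\|_\xi\le\dfrac{\|\Pi v_\pi-v_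\pi\|_\xi}{1-\alpha}$.
   Context: For each $i\in\mathcal{X},a\in\mathcal{A}$: $p^a_i\in\Delta_n$ is the nominal transition probability vector; $U^a_i\subseteq\mathbb{R}^n$ is a nonempty compact confidence region with $\mathcal{P}^a_i:=\{p^a_i+x\mid x\in U^a_i\}\subseteq\Delta_n$; $\widehat{U^a_i}\supseteq U^a_i$ is a nonempty compact proxy region and $\widehat{\mathcal{P}^a_i}:=\{p^a_i+y\mid y\in\widehat{U^a_i}\}$. $\sigma_S(v):=\sup_{s\in S}s^\top v$. Robust Bellman operator: $(T_\pi v)(i):=c(i,\pi(i))+\vartheta\,\sigma_{\mathcal{P}^{\pi(i)}_i}(v)$; proxy robust Bellman operator: $(\widehat{T}_\pi v)(i):=c(i,\pi(i))+\vartheta\,\sigma_{\widehat{\mathcal{P}^{\pi(i)}_i}}(v)$. $P^{\widehat{\pi}}$ is the $n\times n$ transition matrix of the exploration policy, $\xi$ its steady-state distribution with all entries positive, $\xi_{\min}=\min_i\xi_i$, $\|x\|_\xi:=(\sum_i\xi_ix_i^2)^{1/2}$, and $\Pi$ is the $\|\cdot\|_\xi$-orthogonal projection onto $S:=\{\Phi\theta\mid\theta\in\mathbb{R}^d\}$. *)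

theory Defs
  imports "HOL-Analysis.Analysis"
begin

definition prob_simplex :: "(real^'n::finite) set" where
  "prob_simplex = {p. (\<forall>j. p$j \<ge> 0) \<and> (\<Sum>j\<in>UNIV. p$j) = 1}"

definition support_fn :: "(real^'n::finite) set \<Rightarrow> real^'n \<Rightarrow> real" where
  "support_fn S v = (SUP s\<in>S. s \<bullet> v)"

definition shift_set :: "real^'n::finite \<Rightarrow> (real^'n) set \<Rightarrow> (real^'n) set" where
  "shift_set p U = {p + x | x. x \<in> U}"

definition bellman :: "('n::finite \<Rightarrow> 'a \<Rightarrow> real) \<Rightarrow> real \<Rightarrow> ('n \<Rightarrow> 'a)
    \<Rightarrow> ('n \<Rightarrow> 'a \<Rightarrow> (real^'n) set) \<Rightarrow> real^'n \<Rightarrow> real^'n" where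
  "bellman c \<theta> \<pi> Q v = (\<chi> i. c i (\<pi> i) + \<theta> * support_fn (Q i (\<pi> i)) v)"

definition xi_inner :: "real^'n::finite \<Rightarrow> real^'n \<Rightarrow> real^'n \<Rightarrow> real" where
  "xi_inner \<xi> x y = (\<Sum>i\<in>UNIV. \<xi>$i * x$i * y$i)"

definition xi_norm :: "real^'n::finite \<Rightarrow> real^'n \<Rightarrow> real" where
  "xi_norm \<xi> x = sqrt (\<Sum>i\<in>UNIV. \<xi>$i * (x$i)^2)"

definition xi_min :: "real^'n::finite \<Rightarrow> real" where
  "xi_min \<xi> = Min (range (\<lambda>i. \<xi>$i))"

definition feature_space :: "real^'d::finite^'n::finite \<Rightarrow> (real^'n) set" where
  "feature_space \<Phi> = range (\<lambda>\<theta>. \<Phi> *v \<theta>)"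

definition xi_proj :: "real^'n::finite \<Rightarrow> (real^'n) set \<Rightarrow> real^'n \<Rightarrow> real^'n" where
  "xi_proj \<xi> S x = (SOME p. p \<in> S \<and> (\<forall>s\<in>S. xi_inner \<xi> (x - p) s = 0))"

definition beta_coef :: "real^'n::finite \<Rightarrow> (real^'n) set \<Rightarrow> (real^'n) set \<Rightarrow> real" where
  "beta_coef \<xi> U Uhat = (SUP y\<in>Uhat. INF x\<in>U. xi_norm \<xi> (y - x)) / xi_min \<xi>"

end

theory Submission
  imports Defs
begin

text \<open>Write \<open>e = vt - v\<close> and \<open>T'\<close> for the proxy operator. The \<open>\<xi>\<close>-projection \<open>\<Pi>\<close> is linear
  and \<open>\<xi>\<close>-nonexpansive and \<open>vt = \<Pi> (T' vt)\<close>, so \<open>\<parallel>e\<parallel> \<le> \<parallel>T' vt - T v\<parallel> + \<parallel>\<Pi> v - v\<parallel>\<close>,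
  and it suffices to bound \<open>T' vt - T v\<close> row by row. Replacing \<open>v\<close> by \<open>vt\<close> inside a support
  function costs at most \<open>(\<alpha>/\<theta>) (P |e|)\<^sub>i\<close>, because every admissible transition vector is
  dominated by \<open>\<alpha>/\<theta>\<close> times the exploration row; replacing the true uncertainty set by the
  larger proxy set costs at most \<open>\<beta> \<parallel>vt\<parallel>\<close>, because every proxy point lies within
  \<open>\<xi>\<close>-distance \<open>\<beta> \<xi>_min\<close> of the true set and \<open>\<xi>_min (a \<bullet> b) \<le> \<parallel>a\<parallel> \<parallel>b\<parallel>\<close>. By Jensen's inequality
  and stationarity of \<open>\<xi>\<close>, \<open>P\<close> is a \<open>\<xi>\<close>-contraction, whence
  \<open>\<parallel>e\<parallel> \<le> \<alpha> \<parallel>e\<parallel> + \<theta>\<beta> (\<parallel>e\<parallel> + \<parallel>v\<parallel>) + \<parallel>\<Pi> v - v\<parallel>\<close>. Finally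
  \<open>\<alpha> + \<theta>\<beta> \<le> sqrt (2 (\<alpha>\<^sup>2 + \<theta>\<^sup>2\<beta>\<^sup>2)) < 1\<close>.\<close>

definition xi_scale :: "real^'n::finite \<Rightarrow> real^'n \<Rightarrow> real^'n" where
  "xi_scale \<xi> x = (\<chi> i. sqrt (\<xi>$i) * x$i)"

lemma linear_xi_scale: "linear (xi_scale \<xi>)"
  by (rule linearI) (simp_all add: xi_scale_def vec_eq_iff algebra_simps)

lemma xi_norm_scaleR: "xi_norm \<xi> (c *\<^sub>R x) = \<bar>c\<bar> * xi_norm \<xi> x"
proof -
  have "(\<Sum>i\<in>UNIV. \<xi>$i * ((c *\<^sub>R x)$i)^2) = c^2 * (\<Sum>i\<in>UNIV. \<xi>$i * (x$i)^2)"
    by (simp add: sum_distrib_left power_mult_distrib algebra_simps)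
  then show ?thesis by (simp add: xi_norm_def real_sqrt_mult)
qed

lemma xi_norm_abs: "xi_norm \<xi> (\<chi> i. \<bar>x$i\<bar>) = xi_norm \<xi> x"
  by (simp add: xi_norm_def)

lemma xi_norm_const:
  assumes "(\<Sum>i\<in>UNIV. \<xi>$i) = 1"
  shows "xi_norm \<xi> (\<chi> i. c) = \<bar>c\<bar>"
  using assms by (simp add: xi_norm_def flip: sum_distrib_right)

lemma xi_inner_diff_left: "xi_inner \<xi> (a - b) s = xi_inner \<xi> a s - xi_inner \<xi> b s"
  by (simp add: xi_inner_def sum_subtractf algebra_simps)

lemma xi_min_le: "xi_min \<xi> \<le> \<xi>$j"
  unfolding xi_min_def by (rule Min_le) auto

lemma square_weighted_mean_le:
  fixes w x :: "'n::finite \<Rightarrow> real"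
  assumes "\<And>j. 0 \<le> w j" and "(\<Sum>j\<in>UNIV. w j) = 1"
  shows "(\<Sum>j\<in>UNIV. w j * x j)^2 \<le> (\<Sum>j\<in>UNIV. w j * (x j)^2)"
  using convex_on_sum[OF _ _ convex_power2, of UNIV w x] assms by simp

lemma sum_le_sqrt_two_sum_squares: "x + y \<le> sqrt (2 * (x^2 + y^2))"
proof -
  have "sqrt (2 * (x^2 + y^2)) = sqrt (4 * ((x^2 + y^2) / 2))"
    by simp
  also have "\<dots> = 2 * sqrt ((x^2 + y^2) / 2)"
    by (simp only: real_sqrt_mult real_sqrt_four)
  finally show ?thesis using sum_squared_le_sum_of_squares_2[of x y] by simp
qed

locale pos_weights =
  fixes \<xi> :: "real^'n::finite"
  assumes pos: "\<And>i. 0 < \<xi>$i"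
begin

lemma xi_norm_eq_norm_scale: "xi_norm \<xi> x = norm (xi_scale \<xi> x)"
  using pos by (simp add: xi_norm_def norm_vec_def L2_set_def xi_scale_def power_mult_distrib less_imp_le)

lemma xi_inner_eq_inner_scale: "xi_inner \<xi> x y = xi_scale \<xi> x \<bullet> xi_scale \<xi> y"
  unfolding xi_inner_def inner_vec_def xi_scale_def
  using pos by (intro sum.cong) (simp_all add: algebra_simps less_imp_le flip: real_sqrt_mult)

lemma xi_scale_eq_0_iff: "xi_scale \<xi> x = 0 \<longleftrightarrow> x = 0"
  using pos by (simp add: xi_scale_def vec_eq_iff) (metis less_irrefl real_sqrt_eq_zero_cancel_iff)

lemma xi_norm_nonneg: "0 \<le> xi_norm \<xi> x"
  by (simp add: xi_norm_eq_norm_scale)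

lemma xi_norm_triangle: "xi_norm \<xi> (x + y) \<le> xi_norm \<xi> x + xi_norm \<xi> y"
  using norm_triangle_ineq[of "xi_scale \<xi> x" "xi_scale \<xi> y"]
  by (simp add: xi_norm_eq_norm_scale linear_add[OF linear_xi_scale])

lemma xi_norm_mono:
  assumes "\<And>i. \<bar>x$i\<bar> \<le> y$i"
  shows "xi_norm \<xi> x \<le> xi_norm \<xi> y"
  unfolding xi_norm_def
proof (intro real_sqrt_le_mono sum_mono)
  fix i
  have "(x$i)^2 \<le> (y$i)^2"
    using power_mono[OF assms[of i] abs_ge_zero, of 2] by simp
  then show "\<xi>$i * (x$i)^2 \<le> \<xi>$i * (y$i)^2"
    using pos[of i] by (simp add: mult_left_mono)
qed

lemma xi_norm_stochastic_le:
  fixes P :: "real^'n^'n"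
  assumes nonneg: "\<And>i j. 0 \<le> P$i$j" and rows: "\<And>i. (\<Sum>j\<in>UNIV. P$i$j) = 1"
    and stationary: "\<xi> v* P = \<xi>"
  shows "xi_norm \<xi> (P *v x) \<le> xi_norm \<xi> x"
  unfolding xi_norm_def
proof (rule real_sqrt_le_mono)
  have "(\<Sum>i\<in>UNIV. \<xi>$i * ((P *v x)$i)^2) \<le> (\<Sum>i\<in>UNIV. \<xi>$i * (\<Sum>j\<in>UNIV. P$i$j * (x$j)^2))"
    using square_weighted_mean_le[of "\<lambda>j. P$_$j" "\<lambda>j. x$j", OF nonneg rows] pos
    by (intro sum_mono mult_left_mono) (simp_all add: matrix_vector_mult_def less_imp_le)
  also have "\<dots> = (\<Sum>i\<in>UNIV. \<Sum>j\<in>UNIV. \<xi>$i * P$i$j * (x$j)^2)"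
    by (simp add: sum_distrib_left mult.assoc)
  also have "\<dots> = (\<Sum>j\<in>UNIV. (\<xi> v* P)$j * (x$j)^2)"
    by (subst sum.swap) (simp add: vector_matrix_mult_def sum_distrib_right)
  finally show "(\<Sum>i\<in>UNIV. \<xi>$i * ((P *v x)$i)^2) \<le> (\<Sum>j\<in>UNIV. \<xi>$j * (x$j)^2)"
    by (simp add: stationary)
qed

lemma xi_min_pos: "0 < xi_min \<xi>"
proof -
  have "xi_min \<xi> \<in> range (\<lambda>i. \<xi>$i)" unfolding xi_min_def by (rule Min_in) auto
  then show ?thesis using pos by auto
qed

lemma norm_le_xi_norm: "sqrt (xi_min \<xi>) * norm a \<le> xi_norm \<xi> a"
proof -
  have "xi_min \<xi> * (\<Sum>j\<in>UNIV. (a$j)^2) \<le> (\<Sum>j\<in>UNIV. \<xi>$j * (a$j)^2)"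
    unfolding sum_distrib_left by (intro sum_mono mult_right_mono xi_min_le) simp
  then have "sqrt (xi_min \<xi> * (\<Sum>j\<in>UNIV. (a$j)^2)) \<le> xi_norm \<xi> a"
    unfolding xi_norm_def by (rule real_sqrt_le_mono)
  then show ?thesis by (simp add: real_sqrt_mult norm_vec_def L2_set_def)
qed

lemma inner_le_xi_norm_mult: "a \<bullet> b \<le> xi_norm \<xi> a * xi_norm \<xi> b / xi_min \<xi>"
proof -
  have m: "0 < xi_min \<xi>" by (rule xi_min_pos)
  have "xi_min \<xi> * (a \<bullet> b) \<le> xi_min \<xi> * (norm a * norm b)"
    using m by (intro mult_left_mono) (auto intro: order_trans[OF abs_ge_self Cauchy_Schwarz_ineq2])
  also have "\<dots> = (sqrt (xi_min \<xi>) * norm a) * (sqrt (xi_min \<xi>) * norm b)"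
    using m by (simp add: algebra_simps)
  also have "\<dots> \<le> xi_norm \<xi> a * xi_norm \<xi> b"
    using m by (intro mult_mono norm_le_xi_norm) (auto simp: xi_norm_nonneg)
  finally show ?thesis using m by (simp add: field_simps)
qed

lemma xi_proj_exists:
  assumes S: "subspace S"
  shows "\<exists>p. p \<in> S \<and> (\<forall>s\<in>S. xi_inner \<xi> (x - p) s = 0)"
proof -
  obtain y z where y: "y \<in> span (xi_scale \<xi> ` S)"
    and z: "\<And>w. w \<in> span (xi_scale \<xi> ` S) \<Longrightarrow> orthogonal z w"
    and yz: "xi_scale \<xi> x = y + z"
    using orthogonal_subspace_decomp_exists[of "xi_scale \<xi> ` S" "xi_scale \<xi> x"] by blast
  have "span (xi_scale \<xi> ` S) = xi_scale \<xi> ` S"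
    using linear_subspace_image[OF linear_xi_scale S] by (simp add: span_eq_iff)
  with y obtain p where "p \<in> S" "y = xi_scale \<xi> p"
    by blast
  with yz have p: "p \<in> S" "xi_scale \<xi> (x - p) = z"
    by (auto simp: linear_diff[OF linear_xi_scale])
  have "xi_inner \<xi> (x - p) s = 0" if "s \<in> S" for s
    using z[of "xi_scale \<xi> s"] that p(2)
    by (simp add: xi_inner_eq_inner_scale orthogonal_def span_base)
  with p(1) show ?thesis by blast
qed

lemma xi_proj:
  assumes "subspace S"
  shows "xi_proj \<xi> S x \<in> S" and "\<And>s. s \<in> S \<Longrightarrow> xi_inner \<xi> (x - xi_proj \<xi> S x) s = 0"
  using someI_ex[OF xi_proj_exists[OF assms, of x]] by (auto simp: xi_proj_def)

lemma xi_proj_unique: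
  assumes S: "subspace S" and p: "p \<in> S" "\<And>s. s \<in> S \<Longrightarrow> xi_inner \<xi> (x - p) s = 0"
  shows "xi_proj \<xi> S x = p"
proof -
  let ?q = "xi_proj \<xi> S x"
  have d: "?q - p \<in> S" using xi_proj(1)[OF S] p(1) S by (simp add: subspace_diff)
  have "xi_inner \<xi> (?q - p) (?q - p) = xi_inner \<xi> (x - p) (?q - p) - xi_inner \<xi> (x - ?q) (?q - p)"
    using xi_inner_diff_left[of \<xi> "x - p" "x - ?q" "?q - p"] by simp
  also have "\<dots> = 0" using xi_proj(2)[OF S d] p(2)[OF d] by simp
  finally have "xi_scale \<xi> (?q - p) = 0"
    by (simp add: xi_inner_eq_inner_scale)
  then show ?thesis by (simp add: xi_scale_eq_0_iff)
qed

lemma xi_proj_diff: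
  assumes S: "subspace S"
  shows "xi_proj \<xi> S (a - b) = xi_proj \<xi> S a - xi_proj \<xi> S b"
proof (rule xi_proj_unique[OF S])
  show "xi_proj \<xi> S a - xi_proj \<xi> S b \<in> S" using xi_proj(1)[OF S] S by (simp add: subspace_diff)
  fix s assume s: "s \<in> S"
  have "a - b - (xi_proj \<xi> S a - xi_proj \<xi> S b) = (a - xi_proj \<xi> S a) - (b - xi_proj \<xi> S b)"
    by simp
  then show "xi_inner \<xi> (a - b - (xi_proj \<xi> S a - xi_proj \<xi> S b)) s = 0"
    using xi_inner_diff_left[of \<xi> "a - xi_proj \<xi> S a" "b - xi_proj \<xi> S b" s] xi_proj(2)[OF S s]
    by (simp only:)
qed

lemma xi_norm_proj_le:
  assumes S: "subspace S"
  shows "xi_norm \<xi> (xi_proj \<xi> S x) \<le> xi_norm \<xi> x"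
proof -
  let ?q = "xi_proj \<xi> S x"
  have "orthogonal (xi_scale \<xi> ?q) (xi_scale \<xi> (x - ?q))"
    using xi_proj[OF S] by (simp add: orthogonal_def xi_inner_eq_inner_scale inner_commute)
  moreover have "xi_scale \<xi> x = xi_scale \<xi> ?q + xi_scale \<xi> (x - ?q)"
    by (simp add: linear_diff[OF linear_xi_scale])
  ultimately have "(norm (xi_scale \<xi> x))\<^sup>2 = (norm (xi_scale \<xi> ?q))\<^sup>2 + (norm (xi_scale \<xi> (x - ?q)))\<^sup>2"
    by (simp add: norm_add_Pythagorean)
  then have "(norm (xi_scale \<xi> ?q))\<^sup>2 \<le> (norm (xi_scale \<xi> x))\<^sup>2"
    by simp
  then show ?thesis unfolding xi_norm_eq_norm_scale by (rule power2_le_imp_le) simp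
qed

end

lemma compact_shift_set: "compact U \<Longrightarrow> compact (shift_set p U)"
  using compact_translation[of U p] by (simp add: shift_set_def setcompr_eq_image)

lemma continuous_on_xi_norm [continuous_intros]:
  "continuous_on A f \<Longrightarrow> continuous_on A (\<lambda>x. xi_norm \<xi> (f x))"
  unfolding xi_norm_def by (intro continuous_intros)

lemma shift_set_mono: "U \<subseteq> V \<Longrightarrow> shift_set p U \<subseteq> shift_set p V"
  by (auto simp: shift_set_def)

lemma shift_set_eq_empty_iff [simp]: "shift_set p U = {} \<longleftrightarrow> U = {}"
  by (auto simp: shift_set_def)

lemma support_fn_upper: "compact S \<Longrightarrow> s \<in> S \<Longrightarrow> s \<bullet> v \<le> support_fn S v"
  unfolding support_fn_def
  by (intro cSUP_upper bounded_imp_bdd_above compact_imp_bounded compact_continuous_image)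
    (auto intro: continuous_intros)

lemma support_fn_least: "S \<noteq> {} \<Longrightarrow> (\<And>s. s \<in> S \<Longrightarrow> s \<bullet> v \<le> B) \<Longrightarrow> support_fn S v \<le> B"
  unfolding support_fn_def by (rule cSUP_least)

lemma support_fn_le_perturb:
  assumes "T \<noteq> {}" "compact S" and "\<And>t. t \<in> T \<Longrightarrow> \<exists>s\<in>S. t \<bullet> u \<le> s \<bullet> v + r"
  shows "support_fn T u \<le> support_fn S v + r"
proof (rule support_fn_least[OF assms(1)])
  fix t assume "t \<in> T"
  then obtain s where "s \<in> S" "t \<bullet> u \<le> s \<bullet> v + r" using assms(3) by blast
  then show "t \<bullet> u \<le> support_fn S v + r" using support_fn_upper[OF assms(2), of s v] by linarith
qed

lemma inner_le_dominating_row: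
  fixes P :: "real^'n::finite^'n"
  assumes "\<And>j. 0 \<le> q$j" and "\<And>j. q$j \<le> k * P$i$j"
  shows "q \<bullet> w \<le> k * (P *v (\<chi> j. \<bar>w$j\<bar>))$i"
proof -
  have "q \<bullet> w \<le> (\<Sum>j\<in>UNIV. q$j * \<bar>w$j\<bar>)"
    unfolding inner_vec_def by (intro sum_mono) (simp add: assms(1) mult_left_mono)
  also have "\<dots> \<le> (\<Sum>j\<in>UNIV. k * P$i$j * \<bar>w$j\<bar>)"
    using assms(2) by (intro sum_mono mult_right_mono) auto
  also have "\<dots> = k * (P *v (\<chi> j. \<bar>w$j\<bar>))$i"
    by (simp add: matrix_vector_mult_def sum_distrib_left mult.assoc)
  finally show ?thesis .
qed

context pos_weights
begin

lemma xi_dist_attains_inf: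
  assumes "compact U" "U \<noteq> {}"
  obtains x where "x \<in> U" "(INF x'\<in>U. xi_norm \<xi> (y - x')) = xi_norm \<xi> (y - x)"
proof -
  have "continuous_on U (\<lambda>x. xi_norm \<xi> (y - x))"
    by (intro continuous_intros)
  then obtain x where x: "x \<in> U" "\<And>x'. x' \<in> U \<Longrightarrow> xi_norm \<xi> (y - x) \<le> xi_norm \<xi> (y - x')"
    using continuous_attains_inf[OF assms] by blast
  have "(INF x'\<in>U. xi_norm \<xi> (y - x')) = xi_norm \<xi> (y - x)"
    using x by (intro antisym cINF_lower cINF_greatest bdd_belowI[of _ 0]) (auto simp: xi_norm_nonneg)
  with x(1) show thesis by (rule that)
qed

lemma bdd_above_xi_dist_inf:
  assumes "U \<noteq> {}" "compact Uh"
  shows "bdd_above ((\<lambda>y. INF x\<in>U. xi_norm \<xi> (y - x)) ` Uh)"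
proof -
  obtain x0 where x0: "x0 \<in> U" using assms(1) by blast
  have "bounded ((\<lambda>y. xi_norm \<xi> (y - x0)) ` Uh)"
    using assms(2) by (intro compact_imp_bounded compact_continuous_image continuous_intros)
  then have "bdd_above ((\<lambda>y. xi_norm \<xi> (y - x0)) ` Uh)"
    by (rule bounded_imp_bdd_above)
  then obtain M where M: "\<And>y. y \<in> Uh \<Longrightarrow> xi_norm \<xi> (y - x0) \<le> M"
    by (auto simp: bdd_above_def)
  have "(INF x\<in>U. xi_norm \<xi> (y - x)) \<le> xi_norm \<xi> (y - x0)" for y
    using x0 by (intro cINF_lower bdd_belowI[of _ 0]) (auto simp: xi_norm_nonneg)
  with M show ?thesis by (intro bdd_aboveI[of _ M]) (auto intro: order_trans)
qed

lemma beta_coef_nearest: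
  assumes "compact U" "U \<noteq> {}" "compact Uh" "y \<in> Uh"
  shows "\<exists>x\<in>U. xi_norm \<xi> (y - x) \<le> beta_coef \<xi> U Uh * xi_min \<xi>"
proof -
  obtain x where x: "x \<in> U" "(INF x'\<in>U. xi_norm \<xi> (y - x')) = xi_norm \<xi> (y - x)"
    using xi_dist_attains_inf[OF assms(1,2)] .
  have "xi_norm \<xi> (y - x) \<le> (SUP y\<in>Uh. INF x\<in>U. xi_norm \<xi> (y - x))"
    unfolding x(2)[symmetric] using assms(4) bdd_above_xi_dist_inf[OF assms(2,3)] by (rule cSUP_upper)
  also have "\<dots> = beta_coef \<xi> U Uh * xi_min \<xi>"
    using xi_min_pos by (simp add: beta_coef_def)
  finally show ?thesis using x(1) by blast
qed

lemma beta_coef_nonneg: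
  assumes "compact U" "U \<noteq> {}" "compact Uh" "Uh \<noteq> {}"
  shows "0 \<le> beta_coef \<xi> U Uh"
proof -
  obtain y where "y \<in> Uh" using assms(4) by blast
  then obtain x where "xi_norm \<xi> (y - x) \<le> beta_coef \<xi> U Uh * xi_min \<xi>"
    using beta_coef_nearest[OF assms(1-3)] by blast
  then have "0 \<le> beta_coef \<xi> U Uh * xi_min \<xi>"
    using xi_norm_nonneg order_trans by blast
  then show ?thesis using xi_min_pos by (simp add: zero_le_mult_iff)
qed

lemma shift_set_nearest:
  assumes "compact U" "U \<noteq> {}" "compact Uh" "beta_coef \<xi> U Uh \<le> b" "s \<in> shift_set p Uh"
  shows "\<exists>q\<in>shift_set p U. xi_norm \<xi> (s - q) \<le> b * xi_min \<xi>"
proof -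
  obtain y where y: "y \<in> Uh" "s = p + y" using assms(5) by (auto simp: shift_set_def)
  then obtain x where "x \<in> U" "xi_norm \<xi> (y - x) \<le> beta_coef \<xi> U Uh * xi_min \<xi>"
    using beta_coef_nearest[OF assms(1-3)] by blast
  moreover have "beta_coef \<xi> U Uh * xi_min \<xi> \<le> b * xi_min \<xi>"
    using assms(4) xi_min_pos by (simp add: mult_right_mono)
  ultimately have "p + x \<in> shift_set p U" "xi_norm \<xi> (s - (p + x)) \<le> b * xi_min \<xi>"
    using y(2) by (auto simp: shift_set_def)
  then show ?thesis by blast
qed

end

lemma support_fn_le_proxy:
  fixes P :: "real^'n::finite^'n"
  assumes T: "compact T" and S: "S \<noteq> {}" "S \<subseteq> T"
    and dom: "\<And>q j. q \<in> S \<Longrightarrow> 0 \<le> q$j \<and> q$j \<le> k * P$i$j"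
  shows "support_fn S v \<le> support_fn T u + k * (P *v (\<chi> j. \<bar>(u - v)$j\<bar>))$i"
proof (rule support_fn_le_perturb[OF S(1) T])
  fix q assume q: "q \<in> S"
  have "q \<bullet> (v - u) \<le> k * (P *v (\<chi> j. \<bar>(v - u)$j\<bar>))$i"
    using dom[OF q] by (intro inner_le_dominating_row) auto
  moreover have "(\<chi> j. \<bar>(v - u)$j\<bar>) = (\<chi> j. \<bar>(u - v)$j\<bar>)"
    by (simp add: abs_minus_commute)
  moreover have "q \<bullet> v = q \<bullet> u + q \<bullet> (v - u)"
    by (simp add: inner_diff_right)
  ultimately show "\<exists>t\<in>T. q \<bullet> v \<le> t \<bullet> u + k * (P *v (\<chi> j. \<bar>(u - v)$j\<bar>))$i"
    using q S(2) by (intro bexI[of _ q]) auto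
qed

lemma le_divide_of_contraction_bound:
  fixes E \<alpha> \<gamma> r :: real
  assumes "(1 - \<alpha> - \<gamma>) * E \<le> r" and "0 \<le> E" and "\<alpha>^2 + \<gamma>^2 < 1/2"
  shows "E \<le> r / (1 - sqrt (2 * (\<alpha>^2 + \<gamma>^2)))"
proof -
  have "sqrt (2 * (\<alpha>^2 + \<gamma>^2)) < 1"
    using assms(3) by simp
  moreover have "(1 - sqrt (2 * (\<alpha>^2 + \<gamma>^2))) * E \<le> (1 - \<alpha> - \<gamma>) * E"
    using sum_le_sqrt_two_sum_squares[of \<alpha> \<gamma>] assms(2) by (intro mult_right_mono) auto
  ultimately show ?thesis
    using assms(1) by (simp add: pos_le_divide_eq mult.commute)
qed

lemma subspace_feature_space: "subspace (feature_space \<Phi>)"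
  unfolding feature_space_def
  using linear_subspace_image[OF matrix_vector_mul_linear[of \<Phi>] subspace_UNIV] by simp

context pos_weights
begin

lemma support_fn_proxy_le:
  fixes P :: "real^'n^'n"
  assumes S: "compact S" and T: "T \<noteq> {}"
    and dom: "\<And>q j. q \<in> S \<Longrightarrow> 0 \<le> q$j \<and> q$j \<le> k * P$i$j"
    and near: "\<And>t. t \<in> T \<Longrightarrow> \<exists>q\<in>S. xi_norm \<xi> (t - q) \<le> b * xi_min \<xi>"
  shows "support_fn T u \<le> support_fn S v + (k * (P *v (\<chi> j. \<bar>(u - v)$j\<bar>))$i + b * xi_norm \<xi> u)"
proof (rule support_fn_le_perturb[OF T S])
  fix t assume "t \<in> T"
  then obtain q where q: "q \<in> S" "xi_norm \<xi> (t - q) \<le> b * xi_min \<xi>"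
    using near by blast
  have "q \<bullet> (u - v) \<le> k * (P *v (\<chi> j. \<bar>(u - v)$j\<bar>))$i"
    using dom[OF q(1)] by (intro inner_le_dominating_row) auto
  moreover have "(t - q) \<bullet> u \<le> b * xi_norm \<xi> u"
  proof -
    have "(t - q) \<bullet> u \<le> xi_norm \<xi> (t - q) * xi_norm \<xi> u / xi_min \<xi>"
      by (rule inner_le_xi_norm_mult)
    also have "\<dots> \<le> b * xi_min \<xi> * xi_norm \<xi> u / xi_min \<xi>"
      using q(2) xi_min_pos xi_norm_nonneg by (intro divide_right_mono mult_right_mono) auto
    finally show ?thesis
      using xi_min_pos by simp
  qed
  moreover have "t \<bullet> u = q \<bullet> v + q \<bullet> (u - v) + (t - q) \<bullet> u"
    by (simp add: inner_diff_left inner_diff_right)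
  ultimately show "\<exists>q\<in>S. t \<bullet> u \<le> q \<bullet> v + (k * (P *v (\<chi> j. \<bar>(u - v)$j\<bar>))$i + b * xi_norm \<xi> u)"
    using q(1) by (intro bexI[of _ q]) linarith
qed

lemma bellman_proxy_diff_le:
  fixes Q Qh :: "'n \<Rightarrow> 'a \<Rightarrow> (real^'n) set" and P :: "real^'n^'n"
  assumes \<theta>: "0 < \<theta>" and b: "0 \<le> b"
    and Q: "compact (Q i (\<pi> i))" "Q i (\<pi> i) \<noteq> {}"
    and Qh: "compact (Qh i (\<pi> i))" "Q i (\<pi> i) \<subseteq> Qh i (\<pi> i)"
    and dom: "\<And>q j. q \<in> Q i (\<pi> i) \<Longrightarrow> 0 \<le> q$j \<and> \<theta> * q$j \<le> \<alpha> * P$i$j"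
    and near: "\<And>t. t \<in> Qh i (\<pi> i) \<Longrightarrow> \<exists>q\<in>Q i (\<pi> i). xi_norm \<xi> (t - q) \<le> b * xi_min \<xi>"
  shows "\<bar>(bellman c \<theta> \<pi> Qh u - bellman c \<theta> \<pi> Q v)$i\<bar>
           \<le> \<alpha> * (P *v (\<chi> j. \<bar>(u - v)$j\<bar>))$i + \<theta> * b * xi_norm \<xi> u"
proof -
  let ?d = "(P *v (\<chi> j. \<bar>(u - v)$j\<bar>))$i"
  have dom': "0 \<le> q$j \<and> q$j \<le> \<alpha> / \<theta> * P$i$j" if "q \<in> Q i (\<pi> i)" for q j
    using dom[OF that, of j] \<theta> by (simp add: field_simps)
  have "support_fn (Qh i (\<pi> i)) u \<le> support_fn (Q i (\<pi> i)) v + (\<alpha> / \<theta> * ?d + b * xi_norm \<xi> u)"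
    using Q(2) Qh(2) by (intro support_fn_proxy_le[OF Q(1) _ dom' near]) auto
  from mult_left_mono[OF this, of \<theta>]
  have up: "\<theta> * support_fn (Qh i (\<pi> i)) u \<le> \<theta> * support_fn (Q i (\<pi> i)) v + \<alpha> * ?d + \<theta> * b * xi_norm \<xi> u"
    using \<theta> by (simp add: algebra_simps)
  have "support_fn (Q i (\<pi> i)) v \<le> support_fn (Qh i (\<pi> i)) u + \<alpha> / \<theta> * ?d"
    by (rule support_fn_le_proxy[OF Qh(1) Q(2) Qh(2) dom'])
  from mult_left_mono[OF this, of \<theta>]
  have low: "\<theta> * support_fn (Q i (\<pi> i)) v \<le> \<theta> * support_fn (Qh i (\<pi> i)) u + \<alpha> * ?d"
    using \<theta> by (simp add: algebra_simps)
  have "0 \<le> \<theta> * b * xi_norm \<xi> u"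
    using \<theta> b xi_norm_nonneg by simp
  with up low show ?thesis
    by (simp add: bellman_def abs_le_iff)
qed

lemma xi_norm_le_of_componentwise:
  fixes P :: "real^'n^'n"
  assumes "\<And>i j. 0 \<le> P$i$j" "\<And>i. (\<Sum>j\<in>UNIV. P$i$j) = 1" "\<xi> v* P = \<xi>"
    and "(\<Sum>i\<in>UNIV. \<xi>$i) = 1" and "0 \<le> \<alpha>" "0 \<le> \<gamma>"
    and bound: "\<And>i. \<bar>w$i\<bar> \<le> \<alpha> * (P *v (\<chi> j. \<bar>e$j\<bar>))$i + \<gamma>"
  shows "xi_norm \<xi> w \<le> \<alpha> * xi_norm \<xi> e + \<gamma>"
proof -
  have "xi_norm \<xi> w \<le> xi_norm \<xi> (\<alpha> *\<^sub>R (P *v (\<chi> j. \<bar>e$j\<bar>)) + (\<chi> i. \<gamma>))"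
    using bound by (intro xi_norm_mono) simp
  also have "\<dots> \<le> xi_norm \<xi> (\<alpha> *\<^sub>R (P *v (\<chi> j. \<bar>e$j\<bar>))) + xi_norm \<xi> (\<chi> i. \<gamma>)"
    by (rule xi_norm_triangle)
  also have "\<dots> = \<alpha> * xi_norm \<xi> (P *v (\<chi> j. \<bar>e$j\<bar>)) + \<gamma>"
    using assms(5,6) by (simp add: xi_norm_scaleR xi_norm_const[OF assms(4)])
  also have "\<dots> \<le> \<alpha> * xi_norm \<xi> e + \<gamma>"
    using xi_norm_stochastic_le[OF assms(1-3), of "\<chi> j. \<bar>e$j\<bar>"] assms(5)
    by (simp add: xi_norm_abs mult_left_mono)
  finally show ?thesis .
qed

lemma proj_fixpoint_error_le:
  assumes S: "subspace S" and fixpoint: "xi_proj \<xi> S w = vt" and \<gamma>: "0 \<le> \<gamma>"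
    and contraction: "xi_norm \<xi> (w - v) \<le> \<alpha> * xi_norm \<xi> (vt - v) + \<gamma> * xi_norm \<xi> vt"
  shows "(1 - \<alpha> - \<gamma>) * xi_norm \<xi> (vt - v) \<le> \<gamma> * xi_norm \<xi> v + xi_norm \<xi> (xi_proj \<xi> S v - v)"
proof -
  have "vt - xi_proj \<xi> S v = xi_proj \<xi> S (w - v)"
    using xi_proj_diff[OF S] fixpoint by simp
  then have "xi_norm \<xi> (vt - xi_proj \<xi> S v) \<le> xi_norm \<xi> (w - v)"
    using xi_norm_proj_le[OF S] by simp
  moreover have "xi_norm \<xi> (vt - v) \<le> xi_norm \<xi> (vt - xi_proj \<xi> S v) + xi_norm \<xi> (xi_proj \<xi> S v - v)"
    using xi_norm_triangle[of "vt - xi_proj \<xi> S v" "xi_proj \<xi> S v - v"] by simp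
  moreover have "\<gamma> * xi_norm \<xi> vt \<le> \<gamma> * xi_norm \<xi> (vt - v) + \<gamma> * xi_norm \<xi> v"
    using mult_left_mono[OF xi_norm_triangle[of "vt - v" v] \<gamma>] by (simp add: distrib_left)
  ultimately show ?thesis
    using contraction by (simp only: left_diff_distrib mult_1)
qed

end

theorem corollary2:
  fixes c :: "'n::finite \<Rightarrow> 'a::finite \<Rightarrow> real"
    and \<theta> \<alpha> :: real
    and \<pi> :: "'n \<Rightarrow> 'a"
    and p :: "'n \<Rightarrow> 'a \<Rightarrow> real^'n"
    and U Uhat :: "'n \<Rightarrow> 'a \<Rightarrow> (real^'n) set"
    and Pexp :: "real^'n^'n"
    and \<xi> :: "real^'n"
    and \<Phi> :: "real^'d::finite^'n"
    and vt v :: "real^'n"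
  assumes theta: "0 < \<theta>" "\<theta> < 1"
    and p_simplex: "\<And>i a. p i a \<in> prob_simplex"
    and U_ne: "\<And>i a. U i a \<noteq> {}" and U_compact: "\<And>i a. compact (U i a)"
    and U_sub: "\<And>i a. shift_set (p i a) (U i a) \<subseteq> prob_simplex"
    and Uhat_ne: "\<And>i a. Uhat i a \<noteq> {}" and Uhat_compact: "\<And>i a. compact (Uhat i a)"
    and U_Uhat: "\<And>i a. U i a \<subseteq> Uhat i a"
    and Pexp_nonneg: "\<And>i j. Pexp$i$j \<ge> 0"
    and Pexp_rows: "\<And>i. (\<Sum>j\<in>UNIV. Pexp$i$j) = 1"
    and xi_pos: "\<And>i. \<xi>$i > 0"
    and xi_sum: "(\<Sum>i\<in>UNIV. \<xi>$i) = 1"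
    and xi_stat: "\<xi> v* Pexp = \<xi>"
    and alpha: "0 < \<alpha>" "\<alpha> < 1"
    and alpha_bound: "\<And>i j a q. q \<in> shift_set (p i a) (U i a) \<Longrightarrow> \<theta> * q$j \<le> \<alpha> * Pexp$i$j"
    and small: "\<alpha>^2 + \<theta>^2 * (MAX i. beta_coef \<xi> (U i (\<pi> i)) (Uhat i (\<pi> i)))^2 < 1/2"
    and vt_fix: "xi_proj \<xi> (feature_space \<Phi>)
                   (bellman c \<theta> \<pi> (\<lambda>i a. shift_set (p i a) (Uhat i a)) vt) = vt"
    and v_fix: "bellman c \<theta> \<pi> (\<lambda>i a. shift_set (p i a) (U i a)) v = v"
  shows "xi_norm \<xi> (vt - v) \<le>
           (\<theta> * (MAX i. beta_coef \<xi> (U i (\<pi> i)) (Uhat i (\<pi> i))) * xi_norm \<xi> v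
             + xi_norm \<xi> (xi_proj \<xi> (feature_space \<Phi>) v - v))
           / (1 - sqrt (2 * (\<alpha>^2 + \<theta>^2 * (MAX i. beta_coef \<xi> (U i (\<pi> i)) (Uhat i (\<pi> i)))^2)))
       \<and> ((\<forall>i. beta_coef \<xi> (U i (\<pi> i)) (Uhat i (\<pi> i)) = 0) \<longrightarrow>
           xi_norm \<xi> (vt - v) \<le> xi_norm \<xi> (xi_proj \<xi> (feature_space \<Phi>) v - v) / (1 - \<alpha>))"
proof -
  interpret pos_weights \<xi> by standard (rule xi_pos)
  define B where "B = (MAX i. beta_coef \<xi> (U i (\<pi> i)) (Uhat i (\<pi> i)))"
  have B_ge: "beta_coef \<xi> (U i (\<pi> i)) (Uhat i (\<pi> i)) \<le> B" for i
    unfolding B_def by (rule Max_ge) auto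
  have B0: "0 \<le> B"
    using beta_coef_nonneg[OF U_compact U_ne Uhat_compact Uhat_ne] B_ge order_trans by blast
  have "\<bar>(bellman c \<theta> \<pi> (\<lambda>i a. shift_set (p i a) (Uhat i a)) vt
            - bellman c \<theta> \<pi> (\<lambda>i a. shift_set (p i a) (U i a)) v)$i\<bar>
          \<le> \<alpha> * (Pexp *v (\<chi> j. \<bar>(vt - v)$j\<bar>))$i + \<theta> * B * xi_norm \<xi> vt" for i
  proof (rule bellman_proxy_diff_le[OF theta(1) B0])
    fix q j assume "q \<in> shift_set (p i (\<pi> i)) (U i (\<pi> i))"
    then show "0 \<le> q$j \<and> \<theta> * q$j \<le> \<alpha> * Pexp$i$j"
      using U_sub alpha_bound by (auto simp: prob_simplex_def)
  qed (use U_ne shift_set_mono[OF U_Uhat] shift_set_nearest[OF U_compact U_ne Uhat_compact B_ge] in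
      \<open>auto intro: compact_shift_set U_compact Uhat_compact\<close>)
  note row = this[unfolded v_fix]
  have "xi_norm \<xi> (bellman c \<theta> \<pi> (\<lambda>i a. shift_set (p i a) (Uhat i a)) vt - v)
          \<le> \<alpha> * xi_norm \<xi> (vt - v) + \<theta> * B * xi_norm \<xi> vt"
    using alpha(1) theta(1) B0 xi_norm_nonneg
    by (intro xi_norm_le_of_componentwise[OF Pexp_nonneg Pexp_rows xi_stat xi_sum _ _ row]) auto
  then have "(1 - \<alpha> - \<theta> * B) * xi_norm \<xi> (vt - v)
               \<le> \<theta> * B * xi_norm \<xi> v + xi_norm \<xi> (xi_proj \<xi> (feature_space \<Phi>) v - v)"
    using theta(1) B0 by (intro proj_fixpoint_error_le[OF subspace_feature_space vt_fix]) auto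
  moreover have "B = 0" if "\<forall>i. beta_coef \<xi> (U i (\<pi> i)) (Uhat i (\<pi> i)) = 0"
  proof -
    have "B \<in> range (\<lambda>i. beta_coef \<xi> (U i (\<pi> i)) (Uhat i (\<pi> i)))"
      unfolding B_def by (rule Max_in) auto
    with that show ?thesis by auto
  qed
  ultimately show ?thesis
    using le_divide_of_contraction_bound[of \<alpha> "\<theta> * B"] small alpha(2) xi_norm_nonneg
    unfolding B_def by (auto simp: power_mult_distrib pos_le_divide_eq mult.commute)
qed

end
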